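(* (i) If $X',X''\in\lambda\mathrm{Der}(\mathcal{B})[[\lambda]]$ both satisfy $\exp(X')\phi_0'(\mathcal{A}'[[\lambda]])\subseteq C$ and $\exp(X'')\phi_0'(\mathcal{A}'[[\lambda]])\subseteq C$, then there is $\xi\in\lambda\mathrm{Der}(\mathcal{A}')[[\lambda]]$ with $\exp(X')\phi_0'=(\exp(X'')\phi_0')\circ\exp(\xi)$. (ii) If $\pi'$ (resp. $\pi''$) is the unique Poisson structure on $\mathcal{A}'[[\lambda]]$ making $\exp(X')\phi_0'$ (resp. $\exp(X'')\phi_0'$) a Poisson morphism into $(\mathcal{B}[[\lambda]],\sigma)$, then $\pi'$ and $\pi''$ are equivalent, i.e. $\pi''=\exp(\eta)\pi'$ for some $\eta\in\lambda\mathrm{Der}(\mathcal{A}')[[\lambda]]$ (so the equivalence class of $\pi'$ does not depend on the choice of $X'$).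
   Context: $\mathbb{K}$ is a field of characteristic zero. $\mathcal{A},\mathcal{B}$ are commutative $\mathbb{K}$-algebras with Poisson brackets $\pi_0=\{\cdot,\cdot\}_{\mathcal{A}}$, $\sigma_0=\{\cdot,\cdot\}_{\mathcal{B}}$, and $\phi_0:\mathcal{A}\to\mathcal{B}$ is a Poisson morphism. $\pi,\sigma$ are formal Poisson deformations of $\pi_0,\sigma_0$ ($\mathbb{K}[[\lambda]]$-bilinear Poisson brackets on $\mathcal{A}[[\lambda]]$, $\mathcal{B}[[\lambda]]$ with zeroth-order terms $\pi_0,\sigma_0$), and $\Phi:(\mathcal{A}[[\lambda]],\pi)\to(\mathcal{B}[[\lambda]],\sigma)$ is a $\mathbb{K}[[\lambda]]$-linear Poisson morphism with zeroth-order term $\phi_0$. $\mathcal{A}'$ is the Poisson commutant of $\phi_0(\mathcal{A})$ in $(\mathcal{B},\sigma_0)$, with induced bracket, and $\phi_0'$ is the inclusion $\mathcal{A}'\to\mathcal{B}$ extended $\lambda$-linearly. $C$ is the commutant of $\Phi(\mathcal{A}[[\lambda]])$ in $(\mathcal{B}[[\lambda]],\sigma)$. For such $X'$, the map $\exp(X')\phi_0':\mathcal{A}'[[\lambda]]\to C$ is a ring isomorphism and there is a unique Poisson structure on $\mathcal{A}'[[\lambda]]$ making it a Poisson morphism into $(\mathcal{B}[[\lambda]],\sigma)$. Exponentials of derivations are $\exp(X)=\sum_nX^n/n!$. *)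

theory Defs
  imports Main "HOL-Computational_Algebra.Formal_Power_Series"
begin

definition kalgebra :: "('k::field \<Rightarrow> 'a::comm_ring_1 \<Rightarrow> 'a) \<Rightarrow> bool" where
  "kalgebra sc \<longleftrightarrow> vector_space sc \<and> (\<forall>c x y. sc c (x * y) = sc c x * y)"

definition klinear_on :: "('k \<Rightarrow> 'a \<Rightarrow> 'a) \<Rightarrow> ('k \<Rightarrow> 'b \<Rightarrow> 'b) \<Rightarrow> 'a::plus set \<Rightarrow> ('a \<Rightarrow> 'b::plus) \<Rightarrow> bool" where
  "klinear_on scA scB S F \<longleftrightarrow>
     (\<forall>x\<in>S. \<forall>y\<in>S. F (x + y) = F x + F y) \<and> (\<forall>c. \<forall>x\<in>S. F (scA c x) = scB c (F x))"

definition kbilinear_on :: "('k \<Rightarrow> 'a::plus \<Rightarrow> 'a) \<Rightarrow> 'a set \<Rightarrow> ('a \<Rightarrow> 'a \<Rightarrow> 'a) \<Rightarrow> bool" where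
  "kbilinear_on sc S P \<longleftrightarrow>
     (\<forall>y\<in>S. klinear_on sc sc S (\<lambda>x. P x y)) \<and> (\<forall>x\<in>S. klinear_on sc sc S (P x))"

definition poisson_on :: "('k \<Rightarrow> 'a::comm_ring_1 \<Rightarrow> 'a) \<Rightarrow> 'a set \<Rightarrow> ('a \<Rightarrow> 'a \<Rightarrow> 'a) \<Rightarrow> bool" where
  "poisson_on sc S P \<longleftrightarrow> kbilinear_on sc S P \<and>
     (\<forall>x\<in>S. \<forall>y\<in>S. P x y \<in> S \<and> P x y = - P y x) \<and>
     (\<forall>x\<in>S. \<forall>y\<in>S. \<forall>z\<in>S. P x (P y z) + P y (P z x) + P z (P x y) = 0) \<and>
     (\<forall>x\<in>S. \<forall>y\<in>S. \<forall>z\<in>S. P x (y * z) = P x y * z + y * P x z)"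

definition derivation_on :: "('k \<Rightarrow> 'a::comm_ring_1 \<Rightarrow> 'a) \<Rightarrow> 'a set \<Rightarrow> ('a \<Rightarrow> 'a) \<Rightarrow> bool" where
  "derivation_on sc S D \<longleftrightarrow> klinear_on sc sc S D \<and> (\<forall>x\<in>S. D x \<in> S) \<and>
     (\<forall>x\<in>S. \<forall>y\<in>S. D (x * y) = D x * y + x * D y)"

definition fps_over :: "'a set \<Rightarrow> 'a fps set" where
  "fps_over S = {f. \<forall>n. fps_nth f n \<in> S}"

text \<open>A K[[lambda]]-linear map A[[lambda]] \<rightarrow> B[[lambda]] is represented by its
  sequence of coefficients F = sum lambda^n F_n with F_n : A \<rightarrow> B K-linear.\<close>
definition fapply :: "(nat \<Rightarrow> 'a \<Rightarrow> 'b::comm_monoid_add) \<Rightarrow> 'a fps \<Rightarrow> 'b fps" where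
  "fapply F f = Abs_fps (\<lambda>n. \<Sum>i\<le>n. F i (fps_nth f (n - i)))"

definition fcomp :: "(nat \<Rightarrow> 'b \<Rightarrow> 'c::comm_monoid_add) \<Rightarrow> (nat \<Rightarrow> 'a \<Rightarrow> 'b) \<Rightarrow> nat \<Rightarrow> 'a \<Rightarrow> 'c" where
  "fcomp F G = (\<lambda>n x. \<Sum>i\<le>n. F i (G (n - i) x))"

definition fid :: "nat \<Rightarrow> 'a \<Rightarrow> 'a::zero" where
  "fid = (\<lambda>n x. if n = 0 then x else 0)"

primrec fpow :: "(nat \<Rightarrow> 'a \<Rightarrow> 'a::comm_monoid_add) \<Rightarrow> nat \<Rightarrow> nat \<Rightarrow> 'a \<Rightarrow> 'a" where
  "fpow X 0 = fid"
| "fpow X (Suc k) = fcomp X (fpow X k)"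

definition fneg :: "(nat \<Rightarrow> 'a \<Rightarrow> 'b::uminus) \<Rightarrow> nat \<Rightarrow> 'a \<Rightarrow> 'b" where
  "fneg X = (\<lambda>n x. - X n x)"

text \<open>exp(X) = sum_k X^k / k!  for X with vanishing zeroth-order term (X_0 = 0);
  then X^k has order \<ge> k, so the coefficient of lambda^m only involves k \<le> m.\<close>
definition fexp :: "('k::field_char_0 \<Rightarrow> 'a \<Rightarrow> 'a) \<Rightarrow> (nat \<Rightarrow> 'a \<Rightarrow> 'a::comm_monoid_add) \<Rightarrow> nat \<Rightarrow> 'a \<Rightarrow> 'a" where
  "fexp sc X = (\<lambda>m x. \<Sum>k\<le>m. sc (inverse (fact k)) (fpow X k m x))"

text \<open>K[[lambda]]-bilinear bracket on A[[lambda]] given by the series P = sum lambda^n P_n.\<close>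
definition fbracket :: "(nat \<Rightarrow> 'a \<Rightarrow> 'a \<Rightarrow> 'a::comm_monoid_add) \<Rightarrow> 'a fps \<Rightarrow> 'a fps \<Rightarrow> 'a fps" where
  "fbracket P f g = Abs_fps (\<lambda>n. \<Sum>i\<le>n. \<Sum>j\<le>n - i. P i (fps_nth f j) (fps_nth g (n - i - j)))"

definition formal_poisson_on :: "('k \<Rightarrow> 'a::comm_ring_1 \<Rightarrow> 'a) \<Rightarrow> 'a set \<Rightarrow> (nat \<Rightarrow> 'a \<Rightarrow> 'a \<Rightarrow> 'a) \<Rightarrow> bool" where
  "formal_poisson_on sc S P \<longleftrightarrow>
     (\<forall>n. kbilinear_on sc S (P n) \<and> (\<forall>x\<in>S. \<forall>y\<in>S. P n x y \<in> S)) \<and>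
     (\<forall>f\<in>fps_over S. \<forall>g\<in>fps_over S. fbracket P f g = - fbracket P g f) \<and>
     (\<forall>f\<in>fps_over S. \<forall>g\<in>fps_over S. \<forall>h\<in>fps_over S.
        fbracket P f (fbracket P g h) + fbracket P g (fbracket P h f) + fbracket P h (fbracket P f g) = 0) \<and>
     (\<forall>f\<in>fps_over S. \<forall>g\<in>fps_over S. \<forall>h\<in>fps_over S.
        fbracket P f (g * h) = fbracket P f g * h + g * fbracket P f h)"

definition poisson_commutant :: "('b \<Rightarrow> 'b \<Rightarrow> 'b::zero) \<Rightarrow> ('a \<Rightarrow> 'b) \<Rightarrow> 'b set" where
  "poisson_commutant s0 phi0 = {b. \<forall>a. s0 (phi0 a) b = 0}"

end

theory Submission
  imports Defs
begin

(* Part (i) constructs xi one order at a time.  Suppose xi is fixed up to order n, so that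
   exp(X2) exp(xi) agrees with exp(X1) up to order n.  The defect at order n + 1,
   D = exp(X1)_(n+1) - (exp(X2) exp(xi))_(n+1), is a derivation of B, being the leading
   difference of two multiplicative maps that agree below order n + 1.  For a in A', D a is the
   order-(n+1) coefficient of exp(X1) a - exp(X2) exp(xi) a, whose lower coefficients vanish.
   That series is a difference of two elements of the commutant C, and sigma and Phi reduce to
   sigma0 and phi0 at order 0, so its lowest coefficient Poisson-commutes with phi0(A): D a is
   in A'.  Setting xi_(n+1) = D removes the defect.
   Part (ii): exp(X2) is injective (exp(-X2) is a left inverse), so exp(X1) = exp(X2) exp(xi)
   forces exp(xi) to intertwine pi' with pi'', and eta = xi works. *)

unbundle fps_syntax

lemma sum_atMost_triangle:
  fixes h :: "nat \<Rightarrow> nat \<Rightarrow> 'a::comm_monoid_add"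
  shows "(\<Sum>k\<le>m. \<Sum>j\<le>k. h j (k - j)) = (\<Sum>u\<le>m. \<Sum>v\<le>m - u. h u v)"
proof -
  have "(\<Sum>k\<le>m. \<Sum>j\<le>k. h j (k - j)) = (\<Sum>(u, v)\<in>{(u, v). u + v \<le> m}. h u v)"
    by (rule sum.triangle_reindex_eq[symmetric])
  also have "{(u, v). u + v \<le> m} = Sigma {..m} (\<lambda>u. {..m - u})"
    by auto
  finally show ?thesis
    by (simp add: sum.Sigma)
qed

lemma sum_atMost_triangle_eq_square:
  fixes h :: "nat \<Rightarrow> nat \<Rightarrow> 'a::comm_monoid_add"
  assumes "\<And>u v. m < u + v \<Longrightarrow> h u v = 0"
  shows "(\<Sum>k\<le>m. \<Sum>j\<le>k. h j (k - j)) = (\<Sum>u\<le>m. \<Sum>v\<le>m. h u v)"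
  unfolding sum_atMost_triangle
proof (rule sum.cong[OF refl])
  fix u assume "u \<in> {..m}"
  then show "(\<Sum>v\<le>m - u. h u v) = (\<Sum>v\<le>m. h u v)"
    by (intro sum.mono_neutral_left) (auto intro: assms)
qed

lemma fps_mult_nth_cong:
  "(\<And>r. r \<le> m \<Longrightarrow> a $ r = a' $ r) \<Longrightarrow> (\<And>r. r \<le> m \<Longrightarrow> b $ r = b' $ r) \<Longrightarrow> (a * b) $ m = (a' * b') $ m"
  by (auto simp: fps_mult_nth intro!: sum.cong)

lemma fps_mult_nth_eq_0_below:
  fixes a b :: "'a::{comm_monoid_add, mult_zero} fps"
  assumes "\<And>r. r < j \<Longrightarrow> a $ r = 0" and "\<And>s. s < l \<Longrightarrow> b $ s = 0" and "m < j + l"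
  shows "(a * b) $ m = 0"
proof -
  have "a $ r * b $ (m - r) = 0" if "r \<le> m" for r
    using assms that by (cases "r < j") auto
  then show ?thesis
    by (simp add: fps_mult_nth)
qed

section \<open>Operator series acting on formal power series\<close>

lemma fps_over_UNIV [simp]: "fps_over UNIV = UNIV"
  by (simp add: fps_over_def)

lemma klinear_on_UNIV_additive: "klinear_on scA scB UNIV F \<Longrightarrow> additive F"
  by (simp add: klinear_on_def additive_def)

lemma derivation_on_UNIV_additive: "derivation_on sc UNIV D \<Longrightarrow> additive D"
  unfolding derivation_on_def by (blast intro: klinear_on_UNIV_additive)

lemma derivation_on_restrict:
  "derivation_on sc UNIV D \<Longrightarrow> (\<And>x. x \<in> S \<Longrightarrow> D x \<in> S) \<Longrightarrow> derivation_on sc S D"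
  by (simp add: derivation_on_def klinear_on_def)

lemma additive_of_nat_mult:
  fixes L :: "'a::ring_1 \<Rightarrow> 'a"
  assumes "additive L"
  shows "L (of_nat k * x) = of_nat k * L x"
  by (induction k) (simp_all add: algebra_simps additive.add[OF assms] additive.zero[OF assms])

lemma fapply_nth: "fapply F f $ n = (\<Sum>i\<le>n. F i (f $ (n - i)))"
  by (simp add: fapply_def)

lemma fapply_add:
  "(\<And>n. additive (F n)) \<Longrightarrow> fapply F (f + g) = fapply F f + fapply F g"
  by (simp add: fps_eq_iff fapply_nth additive.add sum.distrib)

lemma fapply_sum:
  "(\<And>n. additive (F n)) \<Longrightarrow> fapply F (\<Sum>i\<in>A. f i) = (\<Sum>i\<in>A. fapply F (f i))"
  by (simp add: fps_eq_iff fapply_nth fps_sum_nth additive.sum sum.swap[of _ A])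

lemma fapply_fps_const:
  "(\<And>n. F n 0 = 0) \<Longrightarrow> fapply F (fps_const a) $ n = F n a"
  by (simp add: fapply_nth fps_const_def if_distrib cong: if_cong)

lemma fapply_fps_const_mult_nth:
  fixes F :: "nat \<Rightarrow> 'a::comm_ring_1 \<Rightarrow> 'a"
  assumes "\<And>n. F n 0 = 0"
    and "fapply F (fps_const (a * b)) = fapply F (fps_const a) * fapply F (fps_const b)"
  shows "F m (a * b) = (\<Sum>r\<le>m. F r a * F (m - r) b)"
  using arg_cong[OF assms(2), of "\<lambda>f. f $ m"]
  by (simp add: fapply_fps_const[of F, OF assms(1)] fps_mult_nth atLeast0AtMost)

lemma fapply_nth_cong:
  "(\<And>j. j \<le> m \<Longrightarrow> f $ j = g $ j) \<Longrightarrow> fapply F f $ m = fapply F g $ m"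
  unfolding fapply_nth by (rule sum.cong) auto

lemma fapply_fid: "fapply fid f = f"
  by (simp add: fps_eq_iff fapply_nth fid_def if_distrib cong: if_cong)

lemma fapply_fneg: "fapply (fneg X) f = - fapply X f"
  for X :: "nat \<Rightarrow> 'a \<Rightarrow> 'b::ab_group_add"
  by (simp add: fps_eq_iff fapply_nth fneg_def sum_negf)

lemma fapply_fps_const_neg_one_power:
  fixes X :: "nat \<Rightarrow> 'a \<Rightarrow> 'a::comm_ring_1"
  assumes "\<And>n. additive (X n)"
  shows "fapply X (fps_const ((-1) ^ k) * f) = fps_const ((-1) ^ k) * fapply X f"
  by (cases "even k") (simp_all add: fps_eq_iff fapply_nth additive.minus[OF assms] sum_negf)

lemma fapply_fcomp:
  assumes "\<And>n. additive (F n)"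
  shows "fapply (fcomp F G) f = fapply F (fapply G f)"
proof (rule fps_ext)
  fix m
  have "fapply (fcomp F G) f $ m = (\<Sum>k\<le>m. \<Sum>j\<le>k. F j (G (k - j) (f $ (m - j - (k - j)))))"
    by (auto simp: fapply_nth fcomp_def intro!: sum.cong)
  also have "\<dots> = (\<Sum>u\<le>m. \<Sum>v\<le>m - u. F u (G v (f $ (m - u - v))))"
    by (rule sum_atMost_triangle)
  also have "\<dots> = fapply F (fapply G f) $ m"
    by (simp add: fapply_nth additive.sum[OF assms])
  finally show "fapply (fcomp F G) f $ m = fapply F (fapply G f) $ m" .
qed

lemma fapply_fpow:
  "(\<And>n. additive (X n)) \<Longrightarrow> fapply (fpow X k) f = (fapply X ^^ k) f"
  by (induction k) (simp_all add: fapply_fid fapply_fcomp)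

lemma fpow_nth_below:
  fixes X :: "nat \<Rightarrow> 'a \<Rightarrow> 'a::ab_group_add"
  assumes "\<And>n. additive (X n)" and "X 0 = (\<lambda>x. 0)" and "i < k"
  shows "fpow X k i x = 0"
  using assms(3)
proof (induction k arbitrary: i x)
  case (Suc k)
  have "X j (fpow X k (i - j) x) = 0" if "j \<le> i" for j
    using that Suc by (cases j) (simp_all add: assms(2) additive.zero[OF assms(1)])
  then show ?case
    by (simp add: fcomp_def)
qed simp

lemma funpow_fapply_nth_below:
  fixes X :: "nat \<Rightarrow> 'a \<Rightarrow> 'a::ab_group_add"
  assumes "\<And>n. additive (X n)" and "X 0 = (\<lambda>x. 0)" and "r < k"
  shows "(fapply X ^^ k) f $ r = 0"
proof -
  have "fpow X k i x = 0" if "i \<le> r" for i x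
    using fpow_nth_below[of X, OF assms(1,2)] that assms(3) by simp
  then show ?thesis
    by (simp add: fapply_fpow[OF assms(1), symmetric] fapply_nth)
qed

lemma funpow_fapply_nth_cong:
  fixes X :: "nat \<Rightarrow> 'a \<Rightarrow> 'a::ab_group_add"
  assumes "\<And>n. additive (X n)" and "\<And>j. j \<le> m \<Longrightarrow> f $ j = g $ j"
  shows "(fapply X ^^ k) f $ m = (fapply X ^^ k) g $ m"
  unfolding fapply_fpow[OF assms(1), symmetric] by (rule fapply_nth_cong[OF assms(2)])

lemma funpow_fapply_sum:
  fixes X :: "nat \<Rightarrow> 'a \<Rightarrow> 'a::ab_group_add"
  assumes "\<And>n. additive (X n)"
  shows "(fapply X ^^ k) (\<Sum>i\<in>A. f i) = (\<Sum>i\<in>A. (fapply X ^^ k) (f i))"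
  by (induction k) (simp_all add: fapply_sum[OF assms])

lemma funpow_fapply_fneg:
  fixes X :: "nat \<Rightarrow> 'a \<Rightarrow> 'a::comm_ring_1"
  assumes "\<And>n. additive (X n)"
  shows "(fapply (fneg X) ^^ k) f = fps_const ((-1) ^ k) * (fapply X ^^ k) f"
proof (induction k)
  case (Suc k)
  have "(fapply (fneg X) ^^ Suc k) f = - fapply X (fps_const ((-1) ^ k) * (fapply X ^^ k) f)"
    by (simp only: funpow.simps comp_apply Suc.IH fapply_fneg)
  then show ?case
    by (simp add: fapply_fps_const_neg_one_power[OF assms] fps_eq_iff)
qed simp

lemma fapply_mult_nth:
  fixes X :: "nat \<Rightarrow> 'a \<Rightarrow> 'b::comm_semiring_0"
  shows "(fapply X f * g) $ m = (\<Sum>i\<le>m. \<Sum>p\<le>m - i. X i (f $ p) * g $ (m - i - p))"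
proof -
  have "(fapply X f * g) $ m = (\<Sum>r\<le>m. \<Sum>i\<le>r. X i (f $ (r - i)) * g $ (m - r))"
    by (simp only: fps_mult_nth atLeast0AtMost fapply_nth sum_distrib_right)
  also have "\<dots> = (\<Sum>r\<le>m. \<Sum>i\<le>r. (\<lambda>i p. X i (f $ p) * g $ (m - i - p)) i (r - i))"
    by (intro sum.cong refl) auto
  also have "\<dots> = (\<Sum>i\<le>m. \<Sum>p\<le>m - i. X i (f $ p) * g $ (m - i - p))"
    by (rule sum_atMost_triangle)
  finally show ?thesis .
qed

lemma fapply_leibniz:
  fixes X :: "nat \<Rightarrow> 'b \<Rightarrow> 'b::comm_ring_1"
  assumes X: "\<And>n. additive (X n)" "\<And>n. derivation_on sc S (X n)"
    and f: "f \<in> fps_over S" and g: "g \<in> fps_over S"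
  shows "fapply X (f * g) = fapply X f * g + f * fapply X g"
proof (rule fps_ext)
  fix m
  have leibniz: "X i (f $ p * g $ q) = X i (f $ p) * g $ q + f $ p * X i (g $ q)" for i p q
    using X(2) f g by (simp add: derivation_on_def fps_over_def)
  have reflect: "(\<Sum>q\<le>k. X i (g $ q) * f $ (k - q)) = (\<Sum>p\<le>k. f $ p * X i (g $ (k - p)))" for i k
    using sum.atLeastAtMost_rev[of "\<lambda>q. X i (g $ q) * f $ (k - q)" 0 k]
    by (simp add: atLeast0AtMost mult.commute)
  have "(f * fapply X g) $ m = (\<Sum>i\<le>m. \<Sum>q\<le>m - i. X i (g $ q) * f $ (m - i - q))"
    by (simp only: mult.commute[of f] fapply_mult_nth)
  also have "\<dots> = (\<Sum>i\<le>m. \<Sum>p\<le>m - i. f $ p * X i (g $ (m - i - p)))"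
    by (simp only: reflect)
  finally have right: "(f * fapply X g) $ m = \<dots>" .
  have "fapply X (f * g) $ m = (\<Sum>i\<le>m. \<Sum>p\<le>m - i. X i (f $ p * g $ (m - i - p)))"
    by (simp add: fapply_nth fps_mult_nth atLeast0AtMost additive.sum[OF X(1)])
  also have "\<dots> = (fapply X f * g) $ m + (f * fapply X g) $ m"
    by (simp only: leibniz sum.distrib fapply_mult_nth right)
  finally show "fapply X (f * g) $ m = (fapply X f * g + f * fapply X g) $ m"
    by simp
qed

lemma funpow_leibniz:
  fixes L :: "'a::comm_ring_1 \<Rightarrow> 'a"
  assumes L: "additive L" and closed: "\<And>x. x \<in> M \<Longrightarrow> L x \<in> M"
    and leibniz: "\<And>x y. x \<in> M \<Longrightarrow> y \<in> M \<Longrightarrow> L (x * y) = L x * y + x * L y"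
    and "u \<in> M" "v \<in> M"
  shows "(L ^^ k) (u * v) = (\<Sum>j\<le>k. of_nat (k choose j) * ((L ^^ j) u * (L ^^ (k - j)) v))"
proof (induction k)
  case (Suc k)
  define a where "a j = (L ^^ j) u" for j
  define b where "b j = (L ^^ j) v" for j
  have "a j \<in> M" "b j \<in> M" for j
    unfolding a_def b_def by (induction j) (simp_all add: \<open>u \<in> M\<close> \<open>v \<in> M\<close> closed)
  then have "(L ^^ Suc k) (u * v)
      = (\<Sum>j\<le>k. of_nat (k choose j) * (a (Suc j) * b (k - j))) + (\<Sum>j\<le>k. of_nat (k choose j) * (a j * b (Suc k - j)))"
    using Suc by (simp add: a_def b_def additive.sum[OF L] additive_of_nat_mult[OF L] leibniz
        Suc_diff_le distrib_left sum.distrib)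
  also have "(\<Sum>j\<le>k. of_nat (k choose j) * (a j * b (Suc k - j)))
      = (\<Sum>j\<le>Suc k. of_nat (k choose j) * (a j * b (Suc k - j)))"
    by (simp add: binomial_eq_0)
  also have "\<dots> = a 0 * b (Suc k) + (\<Sum>j\<le>k. of_nat (k choose Suc j) * (a (Suc j) * b (k - j)))"
    by (subst sum.atMost_Suc_shift) simp
  finally show ?case
    by (subst sum.atMost_Suc_shift) (simp add: a_def b_def sum.distrib algebra_simps)
qed simp

lemma leading_difference_leibniz:
  fixes F G :: "nat \<Rightarrow> 'a \<Rightarrow> 'a::comm_ring_1"
  assumes F0: "\<And>x. F 0 x = x" and agree: "\<And>r x. r < m \<Longrightarrow> G r x = F r x" and "0 < m"
    and F_mult: "F m (a * b) = (\<Sum>r\<le>m. F r a * F (m - r) b)"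
    and G_mult: "G m (a * b) = (\<Sum>r\<le>m. G r a * G (m - r) b)"
  shows "F m (a * b) - G m (a * b) = (F m a - G m a) * b + a * (F m b - G m b)"
proof -
  have "F r a * F (m - r) b - G r a * G (m - r) b
      = (if r = m then (F m a - G m a) * b else 0) + (if r = 0 then a * (F m b - G m b) else 0)"
    if r: "r \<le> m" for r
  proof -
    have G0: "G 0 x = x" for x
      using agree[OF \<open>0 < m\<close>] F0 by simp
    consider "r = 0" | "r = m" | "0 < r" "r < m"
      using r by linarith
    then show ?thesis
    proof cases
      case 1
      then show ?thesis
        using \<open>0 < m\<close> by (simp add: F0 G0 right_diff_distrib)
    next
      case 2
      then show ?thesis
        using \<open>0 < m\<close> by (simp add: F0 G0 left_diff_distrib)
    next
      case 3
      then show ?thesis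
        by (simp add: agree)
    qed
  qed
  then have "(\<Sum>r\<le>m. F r a * F (m - r) b - G r a * G (m - r) b) = (F m a - G m a) * b + a * (F m b - G m b)"
    using \<open>0 < m\<close> by (simp add: sum.distrib)
  then show ?thesis
    by (simp add: F_mult G_mult sum_subtractf)
qed

lemma fcomp_cong:
  "(\<And>i. i \<le> m \<Longrightarrow> F i = F' i) \<Longrightarrow> (\<And>i. i \<le> m \<Longrightarrow> G i = G' i) \<Longrightarrow> fcomp F G m = fcomp F' G' m"
  unfolding fcomp_def by (intro ext sum.cong) auto

lemma fpow_cong:
  "(\<And>i. i \<le> m \<Longrightarrow> X i = Y i) \<Longrightarrow> i \<le> m \<Longrightarrow> fpow X k i = fpow Y k i"
  by (induction k arbitrary: i) (auto intro!: fcomp_cong)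

lemma fexp_cong:
  assumes "\<And>i. i \<le> m \<Longrightarrow> X i = Y i"
  shows "fexp sc X m = fexp sc Y m"
proof -
  have "fpow X k m = fpow Y k m" for k
    using fpow_cong[OF assms] by simp
  then show ?thesis
    by (simp add: fexp_def)
qed

lemma fpow_Suc_0:
  fixes X :: "nat \<Rightarrow> 'a \<Rightarrow> 'a::ab_group_add"
  assumes "\<And>n. additive (X n)"
  shows "fpow X (Suc 0) m x = X m x"
  by (simp add: fcomp_def fid_def if_distrib additive.zero[OF assms] cong: if_cong)

lemma fpow_nth_eq_if_agree_below:
  fixes X Y :: "nat \<Rightarrow> 'a \<Rightarrow> 'a::ab_group_add"
  assumes X: "\<And>n. additive (X n)" "X 0 = (\<lambda>x. 0)"
    and Y: "\<And>n. additive (Y n)" "Y 0 = (\<lambda>x. 0)"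
    and agree: "\<And>i. i < m \<Longrightarrow> X i = Y i" and "2 \<le> k"
  shows "fpow X k m = fpow Y k m"
proof -
  obtain k' where k: "k = Suc k'" "0 < k'"
    using \<open>2 \<le> k\<close> by (cases k) auto
  have "X j (fpow X k' (m - j) x) = Y j (fpow Y k' (m - j) x)" if "j \<le> m" for j x
  proof -
    consider "j = 0" | "j = m" "0 < m" | "0 < j" "j < m"
      using \<open>j \<le> m\<close> by linarith
    then show ?thesis
    proof cases
      case 2
      then show ?thesis
        using fpow_nth_below[of X, OF X] fpow_nth_below[of Y, OF Y] k
        by (simp add: additive.zero[OF X(1)] additive.zero[OF Y(1)])
    next
      case 3
      then have "fpow X k' (m - j) = fpow Y k' (m - j)"
        by (intro fpow_cong[where m = "m - 1"]) (auto intro: agree)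
      then show ?thesis
        using agree[OF \<open>j < m\<close>] by simp
    qed (simp add: X(2) Y(2))
  qed
  then show ?thesis
    by (auto simp: k fcomp_def intro!: sum.cong)
qed

section \<open>Exponentials of operator series\<close>

locale k_algebra =
  fixes sc :: "'k::field_char_0 \<Rightarrow> 'b::comm_ring_1 \<Rightarrow> 'b"
  assumes kalgebra: "kalgebra sc"
begin

sublocale vs: vector_space sc
  using kalgebra by (simp add: kalgebra_def)

lemma scale_eq_mult: "sc c x = sc c 1 * x"
  using kalgebra by (metis kalgebra_def mult_1)

definition exp_coeff :: "nat \<Rightarrow> 'b" where
  "exp_coeff k = sc (inverse (fact k)) 1"

lemma exp_coeff_0 [simp]: "exp_coeff 0 = 1"
  by (simp add: exp_coeff_def)

lemma exp_coeff_1 [simp]: "exp_coeff (Suc 0) = 1"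
  by (simp add: exp_coeff_def)

lemma exp_coeff_mult: "exp_coeff j * exp_coeff l = of_nat ((j + l) choose j) * exp_coeff (j + l)"
proof -
  have of_nat_scale: "sc (of_nat n) y = of_nat n * y" for n y
    by (induction n) (simp_all add: vs.scale_left_distrib algebra_simps)
  have "exp_coeff j * exp_coeff l = sc (inverse (fact j) * inverse (fact l)) 1"
    by (metis exp_coeff_def scale_eq_mult vs.scale_scale)
  also have "inverse (fact j) * inverse (fact l) = (of_nat ((j + l) choose j) * inverse (fact (j + l)) :: 'k)"
    by (simp add: binomial_fact field_simps)
  finally show ?thesis
    by (simp add: exp_coeff_def of_nat_scale flip: vs.scale_scale)
qed

lemma fexp_eq_sum: "fexp sc X m x = (\<Sum>k\<le>m. exp_coeff k * fpow X k m x)"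
  unfolding fexp_def exp_coeff_def by (simp flip: scale_eq_mult)

lemma fexp_0_apply: "fexp sc X 0 x = x"
  by (simp add: fexp_eq_sum fid_def)

lemma klinear_on_fid: "klinear_on sc sc UNIV (fid n)"
  by (simp add: klinear_on_def fid_def)

lemma klinear_on_fcomp:
  "(\<And>n. klinear_on sc sc UNIV (F n)) \<Longrightarrow> (\<And>n. klinear_on sc sc UNIV (G n)) \<Longrightarrow>
    klinear_on sc sc UNIV (fcomp F G n)"
  by (simp add: klinear_on_def fcomp_def sum.distrib vs.scale_sum_right)

lemma klinear_on_fpow:
  "(\<And>n. klinear_on sc sc UNIV (X n)) \<Longrightarrow> klinear_on sc sc UNIV (fpow X k n)"
  by (induction k arbitrary: n) (simp_all add: klinear_on_fid klinear_on_fcomp)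

lemma klinear_on_fexp:
  assumes "\<And>n. klinear_on sc sc UNIV (X n)"
  shows "klinear_on sc sc UNIV (fexp sc X n)"
proof -
  have "klinear_on sc sc UNIV (fpow X k n)" for k
    by (rule klinear_on_fpow[OF assms])
  then show ?thesis
    by (simp add: klinear_on_def fexp_def sum.distrib vs.scale_right_distrib vs.scale_sum_right
        mult.commute)
qed

lemma klinear_on_fneg:
  "klinear_on sc sc UNIV (X n) \<Longrightarrow> klinear_on sc sc UNIV (fneg X n)"
  by (simp add: klinear_on_def fneg_def vs.scale_minus_right)

lemma klinear_on_diff:
  "klinear_on sc sc UNIV F \<Longrightarrow> klinear_on sc sc UNIV G \<Longrightarrow> klinear_on sc sc UNIV (\<lambda>x. F x - G x)"
  by (simp add: klinear_on_def vs.scale_right_diff_distrib)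

lemma fexp_eq_if_agree_below:
  fixes X Y :: "nat \<Rightarrow> 'b \<Rightarrow> 'b"
  assumes X: "\<And>n. additive (X n)" "X 0 = (\<lambda>x. 0)"
    and Y: "\<And>n. additive (Y n)" "Y 0 = (\<lambda>x. 0)"
    and agree: "\<And>i. i < m \<Longrightarrow> X i = Y i" and "0 < m"
  shows "fexp sc Y m x = fexp sc X m x + (Y m x - X m x)"
proof -
  have "exp_coeff k * fpow Y k m x = exp_coeff k * fpow X k m x + (if k = 1 then Y m x - X m x else 0)"
    for k
  proof -
    consider "k = 0" | "k = 1" | "2 \<le> k"
      by linarith
    then show ?thesis
    proof cases
      case 3
      then show ?thesis
        using fpow_nth_eq_if_agree_below[of X Y, OF X Y agree] by simp
    qed (use \<open>0 < m\<close> in \<open>simp_all add: fid_def fpow_Suc_0[of X, OF X(1)] fpow_Suc_0[of Y, OF Y(1)]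
      fpow.simps(1) del: fpow.simps(2)\<close>)
  qed
  then show ?thesis
    using \<open>0 < m\<close> by (simp add: fexp_eq_sum sum.distrib)
qed

lemma fcomp_fexp_eq_if_agree_below:
  fixes U V :: "nat \<Rightarrow> 'b \<Rightarrow> 'b"
  assumes F0: "\<And>x. F 0 x = x"
    and U: "\<And>n. additive (U n)" "U 0 = (\<lambda>x. 0)"
    and V: "\<And>n. additive (V n)" "V 0 = (\<lambda>x. 0)"
    and agree: "\<And>i. i < m \<Longrightarrow> U i = V i" and "0 < m"
  shows "fcomp F (fexp sc V) m x = fcomp F (fexp sc U) m x + (V m x - U m x)"
proof -
  have "F i (fexp sc V (m - i) x) = F i (fexp sc U (m - i) x) + (if i = 0 then V m x - U m x else 0)"
    if "i \<le> m" for i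
  proof (cases "i = 0")
    case True
    then show ?thesis
      using fexp_eq_if_agree_below[of U V, OF U V agree \<open>0 < m\<close>] by (simp add: F0)
  next
    case False
    then have "fexp sc V (m - i) = fexp sc U (m - i)"
      using that by (intro fexp_cong) (simp add: agree)
    then show ?thesis
      using False by simp
  qed
  then show ?thesis
    by (simp add: fcomp_def sum.distrib)
qed

lemma fapply_fexp_nth:
  fixes X :: "nat \<Rightarrow> 'b \<Rightarrow> 'b"
  assumes X: "\<And>n. additive (X n)" "X 0 = (\<lambda>x. 0)" and "m \<le> N"
  shows "fapply (fexp sc X) f $ m = (\<Sum>k\<le>N. exp_coeff k * ((fapply X ^^ k) f $ m))"
proof -
  have fexp_N: "fexp sc X i y = (\<Sum>k\<le>N. exp_coeff k * fpow X k i y)" if "i \<le> N" for i y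
    unfolding fexp_eq_sum
    by (rule sum.mono_neutral_left) (use that fpow_nth_below[of X, OF X] in auto)
  have "fapply (fexp sc X) f $ m = (\<Sum>i\<le>m. \<Sum>k\<le>N. exp_coeff k * fpow X k i (f $ (m - i)))"
    using \<open>m \<le> N\<close> by (simp add: fapply_nth fexp_N)
  also have "\<dots> = (\<Sum>k\<le>N. exp_coeff k * (fapply (fpow X k) f $ m))"
    by (subst sum.swap) (simp add: fapply_nth sum_distrib_left)
  finally show ?thesis
    by (simp only: fapply_fpow[OF X(1)])
qed

definition fexp_trunc :: "(nat \<Rightarrow> 'b \<Rightarrow> 'b) \<Rightarrow> nat \<Rightarrow> 'b fps \<Rightarrow> 'b fps" where
  "fexp_trunc X N f = (\<Sum>k\<le>N. fps_const (exp_coeff k) * (fapply X ^^ k) f)"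

lemma fapply_fexp_nth_eq_trunc:
  fixes X :: "nat \<Rightarrow> 'b \<Rightarrow> 'b"
  assumes "\<And>n. additive (X n)" "X 0 = (\<lambda>x. 0)" "m \<le> N"
  shows "fapply (fexp sc X) f $ m = fexp_trunc X N f $ m"
  by (simp add: fapply_fexp_nth[of X, OF assms] fexp_trunc_def fps_sum_nth)

lemma funpow_fapply_exp_coeff:
  assumes "\<And>n. klinear_on sc sc UNIV (X n)"
  shows "(fapply X ^^ j) (fps_const (exp_coeff k) * f) = fps_const (exp_coeff k) * (fapply X ^^ j) f"
proof -
  have "X n (exp_coeff k * y) = exp_coeff k * X n y" for n y
    using assms[of n] by (simp add: klinear_on_def exp_coeff_def flip: scale_eq_mult)
  then have "fapply X (fps_const (exp_coeff k) * g) = fps_const (exp_coeff k) * fapply X g" for g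
    by (simp add: fps_eq_iff fapply_nth sum_distrib_left)
  then show ?thesis
    by (induction j) simp_all
qed

lemma fps_const_in_fps_over: "vs.subspace S \<Longrightarrow> a \<in> S \<Longrightarrow> fps_const a \<in> fps_over S"
  by (simp add: fps_over_def vs.subspace_0)

lemma fapply_in_fps_over:
  assumes "vs.subspace S" and "\<And>n x. x \<in> S \<Longrightarrow> X n x \<in> S" and "f \<in> fps_over S"
  shows "fapply X f \<in> fps_over S"
  using assms by (auto simp: fps_over_def fapply_nth intro!: vs.subspace_sum)

lemma funpow_fapply_in_fps_over:
  assumes "vs.subspace S" and "\<And>n x. x \<in> S \<Longrightarrow> X n x \<in> S" and "f \<in> fps_over S"
  shows "(fapply X ^^ k) f \<in> fps_over S"
  by (induction k) (simp_all add: assms fapply_in_fps_over[OF assms(1,2)])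

lemma fbracket_in_fps_over:
  assumes "vs.subspace S" and "\<And>n x y. x \<in> S \<Longrightarrow> y \<in> S \<Longrightarrow> P n x y \<in> S"
    and "f \<in> fps_over S" and "g \<in> fps_over S"
  shows "fbracket P f g \<in> fps_over S"
  using assms by (auto simp: fps_over_def fbracket_def intro!: vs.subspace_sum)

lemma exp_coeff_mult_in: "vs.subspace S \<Longrightarrow> y \<in> S \<Longrightarrow> exp_coeff k * y \<in> S"
  by (simp add: exp_coeff_def vs.subspace_scale flip: scale_eq_mult)

lemma fapply_fexp_in_fps_over:
  fixes X :: "nat \<Rightarrow> 'b \<Rightarrow> 'b"
  assumes X: "\<And>n. additive (X n)" "X 0 = (\<lambda>x. 0)" "\<And>n x. x \<in> S \<Longrightarrow> X n x \<in> S"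
    and S: "vs.subspace S" and f: "f \<in> fps_over S"
  shows "fapply (fexp sc X) f \<in> fps_over S"
  using funpow_fapply_in_fps_over[OF S X(3) f]
  by (auto simp: fps_over_def fapply_fexp_nth[of X, OF X(1,2) order.refl]
      intro!: vs.subspace_sum[OF S] exp_coeff_mult_in[OF S])

lemma funpow_fapply_mult:
  fixes X :: "nat \<Rightarrow> 'b \<Rightarrow> 'b"
  assumes X: "\<And>n. additive (X n)" "\<And>n. derivation_on sc S (X n)"
    and S: "vs.subspace S" and "f \<in> fps_over S" and "g \<in> fps_over S"
  shows "(fapply X ^^ k) (f * g) = (\<Sum>j\<le>k. of_nat (k choose j) * ((fapply X ^^ j) f * (fapply X ^^ (k - j)) g))"
proof (rule funpow_leibniz[where M = "fps_over S"])
  show "additive (fapply X)"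
    by (simp add: additive_def fapply_add[OF X(1)])
  have "\<And>n x. x \<in> S \<Longrightarrow> X n x \<in> S"
    using X(2) by (simp add: derivation_on_def)
  then show "\<And>h. h \<in> fps_over S \<Longrightarrow> fapply X h \<in> fps_over S"
    by (rule fapply_in_fps_over[OF S])
qed (use assms fapply_leibniz[OF X] in auto)

lemma fapply_fexp_mult:
  fixes X :: "nat \<Rightarrow> 'b \<Rightarrow> 'b"
  assumes X: "\<And>n. additive (X n)" "X 0 = (\<lambda>x. 0)" "\<And>n. derivation_on sc S (X n)"
    and S: "vs.subspace S" and f: "f \<in> fps_over S" and g: "g \<in> fps_over S"
  shows "fapply (fexp sc X) (f * g) = fapply (fexp sc X) f * fapply (fexp sc X) g"
proof (rule fps_ext)
  fix m
  define A where "A j = (fapply X ^^ j) f" for j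
  define B where "B l = (fapply X ^^ l) g" for l
  define c where "c j l = exp_coeff j * exp_coeff l * (A j * B l) $ m" for j l
  have binomial: "(fapply X ^^ k) (f * g) = (\<Sum>j\<le>k. of_nat (k choose j) * (A j * B (k - j)))" for k
    unfolding A_def B_def by (rule funpow_fapply_mult[OF X(1,3) S f g])
  have coeff: "exp_coeff k * (of_nat (k choose j) * x) = exp_coeff j * exp_coeff (k - j) * x"
    if "j \<le> k" for j k x
    using that by (simp add: exp_coeff_mult mult_ac)
  have "fapply (fexp sc X) (f * g) $ m
      = (\<Sum>k\<le>m. exp_coeff k * (\<Sum>j\<le>k. of_nat (k choose j) * (A j * B (k - j)) $ m))"
    by (simp add: fapply_fexp_nth[of X, OF X(1,2) order.refl] binomial fps_sum_nth flip: fps_of_nat)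
  also have "\<dots> = (\<Sum>k\<le>m. \<Sum>j\<le>k. c j (k - j))"
    by (simp add: sum_distrib_left c_def coeff)
  also have "\<dots> = (\<Sum>j\<le>m. \<Sum>l\<le>m. c j l)"
  proof (rule sum_atMost_triangle_eq_square)
    fix j l assume "m < j + l"
    then have "(A j * B l) $ m = 0"
      by (intro fps_mult_nth_eq_0_below[of j _ l])
        (simp_all add: A_def B_def funpow_fapply_nth_below[of X, OF X(1,2)])
    then show "c j l = 0"
      by (simp add: c_def)
  qed
  also have "\<dots> = (fexp_trunc X m f * fexp_trunc X m g) $ m"
  proof -
    have "(fps_const (exp_coeff j) * A j) * (fps_const (exp_coeff l) * B l)
        = fps_const (exp_coeff j * exp_coeff l) * (A j * B l)" for j l
      by (simp only: fps_const_mult[symmetric] mult_ac)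
    then show ?thesis
      by (simp add: c_def fexp_trunc_def sum_product fps_sum_nth A_def B_def)
  qed
  also have "\<dots> = (fapply (fexp sc X) f * fapply (fexp sc X) g) $ m"
    by (rule fps_mult_nth_cong) (simp_all add: fapply_fexp_nth_eq_trunc[of X, OF X(1,2)])
  finally show "fapply (fexp sc X) (f * g) $ m = (fapply (fexp sc X) f * fapply (fexp sc X) g) $ m" .
qed

lemma fapply_fexp_mult_UNIV:
  fixes X :: "nat \<Rightarrow> 'b \<Rightarrow> 'b"
  assumes "\<And>n. derivation_on sc UNIV (X n)" "X 0 = (\<lambda>x. 0)"
  shows "fapply (fexp sc X) (f * g) = fapply (fexp sc X) f * fapply (fexp sc X) g"
proof -
  have "additive (X n)" for n
    using assms(1) by (rule derivation_on_UNIV_additive)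
  from fapply_fexp_mult[of X, OF this assms(2,1) vs.subspace_UNIV] show ?thesis
    by simp
qed

lemma funpow_fapply_fexp_nth:
  fixes X :: "nat \<Rightarrow> 'b \<Rightarrow> 'b"
  assumes X: "\<And>n. klinear_on sc sc UNIV (X n)" "X 0 = (\<lambda>x. 0)"
  shows "(fapply X ^^ j) (fapply (fexp sc X) f) $ m = (\<Sum>l\<le>m. exp_coeff l * ((fapply X ^^ (j + l)) f $ m))"
proof -
  have add: "additive (X n)" for n
    using X(1) by (rule klinear_on_UNIV_additive)
  have "(fapply X ^^ j) (fapply (fexp sc X) f) $ m = (fapply X ^^ j) (fexp_trunc X m f) $ m"
    by (rule funpow_fapply_nth_cong[OF add]) (simp add: fapply_fexp_nth_eq_trunc[of X, OF add X(2)])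
  then show ?thesis
    by (simp add: fexp_trunc_def funpow_fapply_sum[OF add] funpow_fapply_exp_coeff[OF X(1)]
        fps_sum_nth funpow_add)
qed

lemma exp_coeff_alternating_sum:
  "(\<Sum>j\<le>k. (-1) ^ j * exp_coeff j * exp_coeff (k - j)) = (if k = 0 then 1 else 0)"
proof -
  have "(-1) ^ j * exp_coeff j * exp_coeff (k - j) = exp_coeff k * ((-1) ^ j * of_nat (k choose j))"
    if "j \<le> k" for j
  proof -
    have "(-1) ^ j * exp_coeff j * exp_coeff (k - j) = (-1) ^ j * (exp_coeff j * exp_coeff (k - j))"
      by (simp only: mult.assoc)
    then show ?thesis
      using that by (simp add: exp_coeff_mult mult_ac)
  qed
  then have "(\<Sum>j\<le>k. (-1) ^ j * exp_coeff j * exp_coeff (k - j))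
      = exp_coeff k * (\<Sum>j\<le>k. (-1) ^ j * of_nat (k choose j))"
    by (simp add: sum_distrib_left)
  then show ?thesis
    by (simp add: choose_alternating_sum)
qed

lemma fapply_fexp_fneg_left_inverse:
  fixes X :: "nat \<Rightarrow> 'b \<Rightarrow> 'b"
  assumes X: "\<And>n. klinear_on sc sc UNIV (X n)" "X 0 = (\<lambda>x. 0)"
  shows "fapply (fexp sc (fneg X)) (fapply (fexp sc X) f) = f"
proof (rule fps_ext)
  fix m
  have add: "additive (X n)" "additive (fneg X n)" for n
    using klinear_on_UNIV_additive X(1)[of n] klinear_on_fneg[of X n, OF X(1)] by blast+
  have zero: "fneg X 0 = (\<lambda>x. 0)"
    by (simp add: fneg_def X(2))
  define w where "w = fapply (fexp sc X) f"
  define c where "c j l = (-1) ^ j * exp_coeff j * exp_coeff l * ((fapply X ^^ (j + l)) f $ m)" for j l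
  have Xw: "(fapply X ^^ j) w $ m = (\<Sum>l\<le>m. exp_coeff l * ((fapply X ^^ (j + l)) f $ m))" for j
    unfolding w_def by (rule funpow_fapply_fexp_nth[of X, OF X])
  have "fapply (fexp sc (fneg X)) w $ m = (\<Sum>j\<le>m. exp_coeff j * ((fapply (fneg X) ^^ j) w $ m))"
    by (rule fapply_fexp_nth[of "fneg X", OF add(2) zero order.refl])
  also have "\<dots> = (\<Sum>j\<le>m. \<Sum>l\<le>m. c j l)"
    by (simp add: funpow_fapply_fneg[OF add(1)] Xw c_def sum_distrib_left mult_ac)
  also have "\<dots> = (\<Sum>k\<le>m. \<Sum>j\<le>k. c j (k - j))"
    by (rule sum_atMost_triangle_eq_square[symmetric])
      (simp add: c_def funpow_fapply_nth_below[of X, OF add(1) X(2)])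
  also have "\<dots> = (\<Sum>k\<le>m. (\<Sum>j\<le>k. (-1) ^ j * exp_coeff j * exp_coeff (k - j)) * ((fapply X ^^ k) f $ m))"
    by (intro sum.cong refl) (auto simp: c_def sum_distrib_right intro!: sum.cong)
  also have "\<dots> = f $ m"
    by (simp add: exp_coeff_alternating_sum if_distrib[of "\<lambda>c. c * _"] cong: if_cong)
  finally show "fapply (fexp sc (fneg X)) w $ m = f $ m" .
qed

lemma fapply_fexp_fneg_right_inverse:
  fixes X :: "nat \<Rightarrow> 'b \<Rightarrow> 'b"
  assumes "\<And>n. klinear_on sc sc UNIV (X n)" "X 0 = (\<lambda>x. 0)"
  shows "fapply (fexp sc X) (fapply (fexp sc (fneg X)) f) = f"
  using fapply_fexp_fneg_left_inverse[of "fneg X"] assms klinear_on_fneg by (simp add: fneg_def)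

lemma fapply_fexp_inj:
  fixes X :: "nat \<Rightarrow> 'b \<Rightarrow> 'b"
  assumes "\<And>n. klinear_on sc sc UNIV (X n)" "X 0 = (\<lambda>x. 0)"
    and "fapply (fexp sc X) u = fapply (fexp sc X) v"
  shows "u = v"
  by (metis assms fapply_fexp_fneg_left_inverse)

lemma fbracket_eq_fexp_conj:
  fixes X1 X2 xi :: "nat \<Rightarrow> 'b \<Rightarrow> 'b"
  assumes X2: "\<And>n. klinear_on sc sc UNIV (X2 n)" "X2 0 = (\<lambda>x. 0)"
    and xi: "\<And>n. klinear_on sc sc UNIV (xi n)" "xi 0 = (\<lambda>x. 0)" "\<And>n x. x \<in> S \<Longrightarrow> xi n x \<in> S"
    and S: "vs.subspace S"
    and factor: "\<And>f. fapply (fexp sc X1) f = fapply (fexp sc X2) (fapply (fexp sc xi) f)"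
    and P1: "\<And>n x y. x \<in> S \<Longrightarrow> y \<in> S \<Longrightarrow> P1 n x y \<in> S"
    and P1_sigma: "\<forall>f\<in>fps_over S. \<forall>g\<in>fps_over S. fapply (fexp sc X1) (fbracket P1 f g)
      = fbracket sigma (fapply (fexp sc X1) f) (fapply (fexp sc X1) g)"
    and P2_sigma: "\<forall>f\<in>fps_over S. \<forall>g\<in>fps_over S. fapply (fexp sc X2) (fbracket P2 f g)
      = fbracket sigma (fapply (fexp sc X2) f) (fapply (fexp sc X2) g)"
    and f: "f \<in> fps_over S" and g: "g \<in> fps_over S"
  shows "fbracket P2 f g
    = fapply (fexp sc xi) (fbracket P1 (fapply (fexp sc (fneg xi)) f) (fapply (fexp sc (fneg xi)) g))"
proof -
  define u where "u = fapply (fexp sc (fneg xi)) f"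
  define v where "v = fapply (fexp sc (fneg xi)) g"
  have "additive (fneg xi n)" for n
    by (rule klinear_on_UNIV_additive[OF klinear_on_fneg[OF xi(1)]])
  moreover have "fneg xi n x \<in> S" if "x \<in> S" for n x
    using vs.subspace_neg[OF S xi(3)[OF that]] by (simp add: fneg_def)
  ultimately have uv: "u \<in> fps_over S" "v \<in> fps_over S"
    unfolding u_def v_def using f g xi(2) S by (auto intro!: fapply_fexp_in_fps_over simp: fneg_def)
  have f_eq: "f = fapply (fexp sc xi) u" and g_eq: "g = fapply (fexp sc xi) v"
    unfolding u_def v_def by (simp_all add: fapply_fexp_fneg_right_inverse[of xi, OF xi(1,2)])
  have "fapply (fexp sc X2) (fapply (fexp sc xi) (fbracket P1 u v))
      = fbracket sigma (fapply (fexp sc X2) f) (fapply (fexp sc X2) g)"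
    using P1_sigma uv fbracket_in_fps_over[OF S P1 uv] by (simp add: f_eq g_eq flip: factor)
  also have "\<dots> = fapply (fexp sc X2) (fbracket P2 f g)"
    using P2_sigma f g by simp
  finally have "fapply (fexp sc xi) (fbracket P1 u v) = fbracket P2 f g"
    by (rule fapply_fexp_inj[of X2, OF X2])
  then show ?thesis
    by (simp add: u_def v_def)
qed

end

section \<open>Factoring one exponential through another\<close>

locale lambda_derivation_pair = k_algebra sc for sc :: "'k::field_char_0 \<Rightarrow> 'b::comm_ring_1 \<Rightarrow> 'b" +
  fixes X1 X2 :: "nat \<Rightarrow> 'b \<Rightarrow> 'b"
  assumes X1_0: "X1 0 = (\<lambda>x. 0)" and X1_derivation: "\<And>n. derivation_on sc UNIV (X1 n)"
    and X2_0: "X2 0 = (\<lambda>x. 0)" and X2_derivation: "\<And>n. derivation_on sc UNIV (X2 n)"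
begin

text \<open>\<open>exp_quotient\<close> is the \<open>\<xi>\<close> of part (i), and \<open>exp_quotient_upto n\<close> its truncation after
  order \<open>n\<close>.\<close>

primrec exp_quotient_upto :: "nat \<Rightarrow> nat \<Rightarrow> 'b \<Rightarrow> 'b" where
  "exp_quotient_upto 0 = (\<lambda>_ _. 0)"
| "exp_quotient_upto (Suc n) = (exp_quotient_upto n)(Suc n := (\<lambda>a. fexp sc X1 (Suc n) a -
     fcomp (fexp sc X2) (fexp sc (exp_quotient_upto n)) (Suc n) a))"

definition exp_quotient :: "nat \<Rightarrow> 'b \<Rightarrow> 'b" where
  "exp_quotient n = exp_quotient_upto n n"

lemma exp_quotient_upto_stable: "k \<le> m \<Longrightarrow> exp_quotient_upto m k = exp_quotient k"
  unfolding exp_quotient_def by (induction m) (auto simp: le_Suc_eq)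

lemma exp_quotient_upto_above: "n < k \<Longrightarrow> exp_quotient_upto n k = (\<lambda>x. 0)"
  by (induction n) auto

lemma exp_quotient_upto_0: "exp_quotient_upto n 0 = (\<lambda>x. 0)"
  by (induction n) auto

lemma X1_linear: "klinear_on sc sc UNIV (X1 n)" and X2_linear: "klinear_on sc sc UNIV (X2 n)"
  using X1_derivation X2_derivation by (simp_all add: derivation_on_def)

lemma fapply_fcomp_fexp_X2: "fapply (fcomp (fexp sc X2) G) f = fapply (fexp sc X2) (fapply G f)"
  by (rule fapply_fcomp[OF klinear_on_UNIV_additive[OF klinear_on_fexp[OF X2_linear]]])

lemma exp_quotient_upto_linear: "klinear_on sc sc UNIV (exp_quotient_upto n k)"
proof (induction n arbitrary: k)
  case 0
  show ?case
    by (simp add: klinear_on_def)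
next
  case (Suc n)
  have "klinear_on sc sc UNIV (fcomp (fexp sc X2) (fexp sc (exp_quotient_upto n)) (Suc n))"
    by (intro klinear_on_fcomp klinear_on_fexp X2_linear Suc.IH)
  then show ?case
    by (simp add: Suc.IH klinear_on_diff klinear_on_fexp X1_linear)
qed

lemma fcomp_fexp_exp_quotient_upto:
  "j \<le> n \<Longrightarrow> fcomp (fexp sc X2) (fexp sc (exp_quotient_upto n)) j = fexp sc X1 j"
proof (induction n arbitrary: j)
  case 0
  then show ?case
    by (simp add: fcomp_def fexp_0_apply fun_eq_iff)
next
  case (Suc n)
  let ?U = "exp_quotient_upto n" and ?V = "exp_quotient_upto (Suc n)"
  have additive: "additive (?U i)" "additive (?V i)" for i
    by (rule klinear_on_UNIV_additive[OF exp_quotient_upto_linear])+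
  have agree: "?U i = ?V i" if "i \<le> n" for i
    using that by simp
  have top: "?V (Suc n) x = fexp sc X1 (Suc n) x - fcomp (fexp sc X2) (fexp sc ?U) (Suc n) x" for x
    by simp
  show ?case
  proof (cases "j = Suc n")
    case True
    have "fcomp (fexp sc X2) (fexp sc ?V) (Suc n) x
        = fcomp (fexp sc X2) (fexp sc ?U) (Suc n) x + (?V (Suc n) x - ?U (Suc n) x)" for x
      by (rule fcomp_fexp_eq_if_agree_below[of _ ?U ?V])
        (simp_all add: fexp_0_apply additive exp_quotient_upto_0 agree del: exp_quotient_upto.simps)
    then show ?thesis
      using True by (simp add: fun_eq_iff top exp_quotient_upto_above del: exp_quotient_upto.simps)
  next
    case False
    then have "fcomp (fexp sc X2) (fexp sc ?V) j = fcomp (fexp sc X2) (fexp sc ?U) j"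
      using Suc.prems by (intro fcomp_cong refl fexp_cong) (simp add: agree del: exp_quotient_upto.simps)
    then show ?thesis
      using False Suc by (simp del: exp_quotient_upto.simps)
  qed
qed

lemma exp_quotient_upto_derivation: "derivation_on sc UNIV (exp_quotient_upto n k)"
proof (induction n arbitrary: k)
  case 0
  show ?case
    by (simp add: derivation_on_def klinear_on_def)
next
  case (Suc n)
  let ?U = "exp_quotient_upto n"
  let ?G = "fcomp (fexp sc X2) (fexp sc ?U)"
  have lin: "klinear_on sc sc UNIV (fexp sc X1 r)" "klinear_on sc sc UNIV (?G r)" for r
    by (simp_all add: klinear_on_fexp klinear_on_fcomp X1_linear X2_linear exp_quotient_upto_linear)
  have zero: "fexp sc X1 r 0 = 0" "?G r 0 = 0" for r
    using lin[of r] by (simp_all add: additive.zero klinear_on_UNIV_additive)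
  have G_mult: "fapply ?G (f * g) = fapply ?G f * fapply ?G g" for f g
    by (simp add: fapply_fcomp_fexp_X2 fapply_fexp_mult_UNIV X2_derivation X2_0 Suc.IH
        exp_quotient_upto_0)
  have "fexp sc X1 (Suc n) (a * b) - ?G (Suc n) (a * b)
      = (fexp sc X1 (Suc n) a - ?G (Suc n) a) * b + a * (fexp sc X1 (Suc n) b - ?G (Suc n) b)" for a b
  proof (rule leading_difference_leibniz)
    show "?G r x = fexp sc X1 r x" if "r < Suc n" for r x
      using fcomp_fexp_exp_quotient_upto[of r n] that by simp
    show "fexp sc X1 (Suc n) (a * b) = (\<Sum>r\<le>Suc n. fexp sc X1 r a * fexp sc X1 (Suc n - r) b)"
      by (intro fapply_fps_const_mult_nth zero)
        (simp add: fapply_fexp_mult_UNIV X1_derivation X1_0 flip: fps_const_mult)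
    show "?G (Suc n) (a * b) = (\<Sum>r\<le>Suc n. ?G r a * ?G (Suc n - r) b)"
      by (intro fapply_fps_const_mult_nth zero) (simp add: G_mult flip: fps_const_mult)
  qed (simp_all add: fexp_0_apply)
  with lin have "derivation_on sc UNIV (exp_quotient_upto (Suc n) (Suc n))"
    by (simp add: derivation_on_def klinear_on_diff)
  then show ?case
    using Suc.IH by (cases "k = Suc n") simp_all
qed

lemma exp_quotient_0: "exp_quotient 0 = (\<lambda>x. 0)"
  by (simp add: exp_quotient_def)

lemma exp_quotient_derivation: "derivation_on sc UNIV (exp_quotient n)"
  by (simp add: exp_quotient_def exp_quotient_upto_derivation)

lemma exp_quotient_linear: "klinear_on sc sc UNIV (exp_quotient n)"
  by (simp add: exp_quotient_def exp_quotient_upto_linear)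

lemma fcomp_fexp_exp_quotient: "fcomp (fexp sc X2) (fexp sc exp_quotient) = fexp sc X1"
proof
  fix j
  have "fcomp (fexp sc X2) (fexp sc exp_quotient) j = fcomp (fexp sc X2) (fexp sc (exp_quotient_upto j)) j"
    by (intro fcomp_cong refl fexp_cong) (simp add: exp_quotient_upto_stable)
  then show "fcomp (fexp sc X2) (fexp sc exp_quotient) j = fexp sc X1 j"
    by (simp add: fcomp_fexp_exp_quotient_upto)
qed

lemma fapply_fexp_exp_quotient:
  "fapply (fexp sc X1) f = fapply (fexp sc X2) (fapply (fexp sc exp_quotient) f)"
  by (simp flip: fapply_fcomp_fexp_X2 add: fcomp_fexp_exp_quotient)

end

locale exp_factorization = lambda_derivation_pair sc X1 X2
  for sc :: "'k::field_char_0 \<Rightarrow> 'b::comm_ring_1 \<Rightarrow> 'b" and X1 X2 +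
  fixes S :: "'b set" and Cs :: "'b fps set"
    \<comment> \<open>\<open>S\<close> and \<open>Cs\<close> play the roles of \<open>A'\<close> and of the commutant \<open>C\<close>.\<close>
  assumes S: "vs.subspace S"
    and Cs_diff: "\<And>g h. g \<in> Cs \<Longrightarrow> h \<in> Cs \<Longrightarrow> g - h \<in> Cs"
    and Cs_lowest_coeff: "\<And>h m. h \<in> Cs \<Longrightarrow> (\<And>j. j < m \<Longrightarrow> h $ j = 0) \<Longrightarrow> h $ m \<in> S"
    and X1_Cs: "\<And>f. f \<in> fps_over S \<Longrightarrow> fapply (fexp sc X1) f \<in> Cs"
    and X2_Cs: "\<And>f. f \<in> fps_over S \<Longrightarrow> fapply (fexp sc X2) f \<in> Cs"
begin

lemma exp_quotient_upto_in: "x \<in> S \<Longrightarrow> exp_quotient_upto n k x \<in> S"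
proof (induction n arbitrary: k x)
  case 0
  then show ?case
    using vs.subspace_0[OF S] by simp
next
  case (Suc n)
  let ?U = "exp_quotient_upto n"
  let ?G = "fcomp (fexp sc X2) (fexp sc ?U)"
  have lin: "klinear_on sc sc UNIV (fexp sc X1 r)" "klinear_on sc sc UNIV (?G r)" for r
    by (simp_all add: klinear_on_fexp klinear_on_fcomp X1_linear X2_linear exp_quotient_upto_linear)
  have zero: "fexp sc X1 r 0 = 0" "?G r 0 = 0" for r
    using lin[of r] by (simp_all add: additive.zero klinear_on_UNIV_additive)
  define h where "h = fapply (fexp sc X1) (fps_const x) - fapply ?G (fps_const x)"
  have h_nth: "h $ j = fexp sc X1 j x - ?G j x" for j
    by (simp add: h_def fapply_fps_const zero)
  have "fapply (fexp sc ?U) (fps_const x) \<in> fps_over S"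
    using Suc klinear_on_UNIV_additive[OF exp_quotient_upto_linear]
    by (intro fapply_fexp_in_fps_over[of ?U, OF _ exp_quotient_upto_0 _ S] fps_const_in_fps_over[OF S])
  then have "fapply ?G (fps_const x) \<in> Cs"
    by (simp add: X2_Cs fapply_fcomp_fexp_X2)
  then have "h \<in> Cs"
    unfolding h_def using Suc.prems by (intro Cs_diff X1_Cs fps_const_in_fps_over[OF S])
  then have "h $ Suc n \<in> S"
    by (rule Cs_lowest_coeff) (simp add: h_nth fcomp_fexp_exp_quotient_upto)
  then show ?case
    using Suc by (simp add: h_nth)
qed

lemma exp_quotient_in: "x \<in> S \<Longrightarrow> exp_quotient n x \<in> S"
  by (simp add: exp_quotient_def exp_quotient_upto_in)

lemma exp_quotient_derivation_on: "derivation_on sc S (exp_quotient n)"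
  by (rule derivation_on_restrict[OF exp_quotient_derivation exp_quotient_in])

lemma exp_quotient_conj_fbracket:
  assumes "formal_poisson_on sc S P1"
    and "\<forall>f\<in>fps_over S. \<forall>g\<in>fps_over S. fapply (fexp sc X1) (fbracket P1 f g)
      = fbracket sigma (fapply (fexp sc X1) f) (fapply (fexp sc X1) g)"
    and "\<forall>f\<in>fps_over S. \<forall>g\<in>fps_over S. fapply (fexp sc X2) (fbracket P2 f g)
      = fbracket sigma (fapply (fexp sc X2) f) (fapply (fexp sc X2) g)"
    and "f \<in> fps_over S" and "g \<in> fps_over S"
  shows "fbracket P2 f g = fapply (fexp sc exp_quotient)
    (fbracket P1 (fapply (fexp sc (fneg exp_quotient)) f) (fapply (fexp sc (fneg exp_quotient)) g))"
proof (rule fbracket_eq_fexp_conj[of X2 exp_quotient S X1 P1 sigma P2])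
  show "P1 n x y \<in> S" if "x \<in> S" "y \<in> S" for n x y
    using assms(1) that unfolding formal_poisson_on_def by blast
qed (use assms in \<open>simp_all add: X2_linear X2_0 exp_quotient_linear exp_quotient_0 exp_quotient_in S
  fapply_fexp_exp_quotient\<close>)

end

section \<open>The Poisson commutant\<close>

lemma fbracket_diff_right:
  assumes "\<And>i x. additive (P i x)"
  shows "fbracket P f (g - h) = fbracket P f g - fbracket P f h"
  by (simp add: fps_eq_iff fbracket_def additive.diff[OF assms] sum_subtractf)

lemma fbracket_nth_lowest:
  assumes "\<And>i x. additive (P i x)" and "\<And>j. j < m \<Longrightarrow> h $ j = 0"
  shows "fbracket P f h $ m = P 0 (f $ 0) (h $ m)"
proof -
  have "P i (f $ j) (h $ (m - i - j)) = (if i = 0 \<and> j = 0 then P 0 (f $ 0) (h $ m) else 0)"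
    if "i \<le> m" "j \<le> m - i" for i j
    using that assms(2)[of "m - i - j"] additive.zero[OF assms(1)] by auto
  then have "fbracket P f h $ m = (\<Sum>i\<le>m. \<Sum>j\<le>m - i. if i = 0 \<and> j = 0 then P 0 (f $ 0) (h $ m) else 0)"
    by (simp add: fbracket_def)
  also have "\<dots> = (\<Sum>i\<le>m. if i = 0 then P 0 (f $ 0) (h $ m) else 0)"
    by (intro sum.cong refl) (cases "i = 0"; simp)
  finally show ?thesis
    by simp
qed

lemma commutant_lowest_coeff:
  assumes "\<And>i x. additive (sigma i x)" and "\<And>n. Phi n 0 = 0"
    and "\<forall>f. fbracket sigma (fapply Phi f) h = 0" and "\<And>j. j < m \<Longrightarrow> h $ j = 0"
  shows "h $ m \<in> poisson_commutant (sigma 0) (Phi 0)"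
proof -
  have "sigma 0 (Phi 0 a) (h $ m) = fbracket sigma (fapply Phi (fps_const a)) h $ m" for a
    using fbracket_nth_lowest[where P = sigma, OF assms(1,4)]
    by (simp add: fapply_fps_const[of Phi, OF assms(2)])
  then have "sigma 0 (Phi 0 a) (h $ m) = 0" for a
    using assms(3) by simp
  then show ?thesis
    by (simp add: poisson_commutant_def)
qed

lemma (in k_algebra) poisson_commutant_subspace:
  assumes "poisson_on sc UNIV s0"
  shows "vs.subspace (poisson_commutant s0 phi0)"
proof -
  have lin: "klinear_on sc sc UNIV (s0 u)" for u
    using assms unfolding poisson_on_def kbilinear_on_def by blast
  then have "s0 u 0 = 0" for u
    by (rule additive.zero[OF klinear_on_UNIV_additive])
  with lin show ?thesis
    by (simp add: vs.subspace_def poisson_commutant_def klinear_on_def vs.scale_zero_right)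
qed

theorem proposition3p10:
  fixes scA :: "'k::field_char_0 \<Rightarrow> 'a::comm_ring_1 \<Rightarrow> 'a"
    and scB :: "'k \<Rightarrow> 'b::comm_ring_1 \<Rightarrow> 'b"
    and pi0 :: "'a \<Rightarrow> 'a \<Rightarrow> 'a" and sigma0 :: "'b \<Rightarrow> 'b \<Rightarrow> 'b"
    and phi0 :: "'a \<Rightarrow> 'b"
    and pi :: "nat \<Rightarrow> 'a \<Rightarrow> 'a \<Rightarrow> 'a" and sigma :: "nat \<Rightarrow> 'b \<Rightarrow> 'b \<Rightarrow> 'b"
    and Phi :: "nat \<Rightarrow> 'a \<Rightarrow> 'b"
    and X1 X2 :: "nat \<Rightarrow> 'b \<Rightarrow> 'b"
  defines "A' \<equiv> poisson_commutant sigma0 phi0"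
    and "C \<equiv> {g. \<forall>f. fbracket sigma (fapply Phi f) g = 0}"
  assumes algA: "kalgebra scA" and algB: "kalgebra scB"
    and pA: "poisson_on scA UNIV pi0" and pB: "poisson_on scB UNIV sigma0"
    and phi0_lin: "klinear_on scA scB UNIV phi0"
    and phi0_one: "phi0 1 = 1"
    and phi0_mult: "\<And>x y. phi0 (x * y) = phi0 x * phi0 y"
    and phi0_poisson: "\<And>x y. phi0 (pi0 x y) = sigma0 (phi0 x) (phi0 y)"
    and pi_def: "formal_poisson_on scA UNIV pi" and pi_0: "pi 0 = pi0"
    and sigma_def: "formal_poisson_on scB UNIV sigma" and sigma_0: "sigma 0 = sigma0"
    and Phi_lin: "\<And>n. klinear_on scA scB UNIV (Phi n)"
    and Phi_0: "Phi 0 = phi0"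
    and Phi_one: "fapply Phi 1 = 1"
    and Phi_mult: "\<And>f g. fapply Phi (f * g) = fapply Phi f * fapply Phi g"
    and Phi_poisson: "\<And>f g. fapply Phi (fbracket pi f g) = fbracket sigma (fapply Phi f) (fapply Phi g)"
    and X1_0: "X1 0 = (\<lambda>x. 0)" and X1_der: "\<And>n. derivation_on scB UNIV (X1 n)"
    and X2_0: "X2 0 = (\<lambda>x. 0)" and X2_der: "\<And>n. derivation_on scB UNIV (X2 n)"
    and X1_C: "fapply (fexp scB X1) ` fps_over A' \<subseteq> C"
    and X2_C: "fapply (fexp scB X2) ` fps_over A' \<subseteq> C"
  shows "(\<exists>xi. xi 0 = (\<lambda>x. 0) \<and> (\<forall>n. derivation_on scB A' (xi n)) \<and>
            (\<forall>f\<in>fps_over A'. fapply (fexp scB X1) f = fapply (fexp scB X2) (fapply (fexp scB xi) f)))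
       \<and> (\<forall>P1 P2.
            formal_poisson_on scB A' P1 \<and>
            (\<forall>f\<in>fps_over A'. \<forall>g\<in>fps_over A'.
               fapply (fexp scB X1) (fbracket P1 f g) = fbracket sigma (fapply (fexp scB X1) f) (fapply (fexp scB X1) g)) \<and>
            formal_poisson_on scB A' P2 \<and>
            (\<forall>f\<in>fps_over A'. \<forall>g\<in>fps_over A'.
               fapply (fexp scB X2) (fbracket P2 f g) = fbracket sigma (fapply (fexp scB X2) f) (fapply (fexp scB X2) g))
          \<longrightarrow> (\<exists>eta. eta 0 = (\<lambda>x. 0) \<and> (\<forall>n. derivation_on scB A' (eta n)) \<and>
                (\<forall>f\<in>fps_over A'. \<forall>g\<in>fps_over A'.
                   fbracket P2 f g = fapply (fexp scB eta)
                      (fbracket P1 (fapply (fexp scB (fneg eta)) f) (fapply (fexp scB (fneg eta)) g)))))"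
proof -
  \<comment> \<open>Only the linearity of \<open>sigma\<close> and \<open>Phi\<close> and their order-0 terms are used.\<close>
  interpret k_algebra scB
    by (rule k_algebra.intro[OF algB])
  have sigma_additive: "additive (sigma i x)" for i x
    using sigma_def unfolding formal_poisson_on_def kbilinear_on_def by (blast intro: klinear_on_UNIV_additive)
  have Phi_zero: "Phi n 0 = 0" for n
    by (rule additive.zero[OF klinear_on_UNIV_additive[OF Phi_lin]])
  interpret exp_factorization scB X1 X2 A' C
  proof
    show "vs.subspace A'"
      unfolding A'_def by (rule poisson_commutant_subspace[OF pB])
    show "g - h \<in> C" if "g \<in> C" "h \<in> C" for g h
      using that by (simp add: C_def fbracket_diff_right sigma_additive)
    show "h $ m \<in> A'" if "h \<in> C" "\<And>j. j < m \<Longrightarrow> h $ j = 0" for h m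
      using commutant_lowest_coeff[of sigma Phi, OF sigma_additive Phi_zero] that by (simp add: A'_def C_def sigma_0 Phi_0)
  qed (use X1_0 X1_der X2_0 X2_der X1_C X2_C in auto)
  show ?thesis
    by (intro conjI allI impI exI[of _ exp_quotient])
      (auto simp: exp_quotient_0 exp_quotient_derivation_on fapply_fexp_exp_quotient
        intro: exp_quotient_conj_fbracket)
qed

end
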